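(* Let $M\ge 0$, $\mathcal{M}=\{0,\dots,M\}$, $T\ge 1$, $c_u,c_l>0$, $0\le\beta\le 1$, and let $P=(P_{i,j})_{i,j\in\mathcal{M}}$ be a stochastic matrix with rows $P_{i,\cdot}$. For a probability vector $b$ on $\mathcal{M}$ and $r\in\mathcal{M}$ let $$\bar C(b;r)=c_l\sum_{i=r}^{M} b(i)(i-r)+c_u\sum_{i=0}^{r-1} b(i)(r-i),$$ and, when $\sum_{j=r}^M b(j)>0$, let $T_r[b]$ be the probability vector with $T_r[b](i)=0$ for $i<r$ and $T_r[b](i)=b(i)/\sum_{j=r}^M b(j)$ for $i\ge r$ (viewed as a row vector, so $T_r[b]P$ is a probability vector). Define value functions on probability vectors recursively by $$V_T(b;r)=\bar C(b;r),\qquad V_t(b)=\min_{r\in\mathcal{M}}V_t(b;r),$$ $$V_t(b;r)=\bar C(b;r)+\beta\Big[\Big(\sum_{i=r}^M b(i)\Big)V_{t+1}(T_r[b]P)+\sum_{i=0}^{r-1} b(i)\,V_{t+1}(P_{i,\cdot})\Big],\quad t<T,$$ where the first term in brackets is taken to be $0$ when $\sum_{i=r}^M b(i)=0$. Then for every $t\in\{1,\dots,T\}$, every $r\in\mathcal{M}$, all probability vectors $b_1,b_2$ and every $\lambda\in[0,1]$, $$V_t(\lambda b_1+(1-\lambda)b_2;r)\ge \lambda V_t(b_1;r)+(1-\lambda)V_t(b_2;r),$$ $$V_t(\lambda b_1+(1-\lambda)b_2)\ge \lambda V_t(b_1)+(1-\lambda)V_t(b_2).$$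
   Context: This is the belief-based dynamic program for tracking a Markov chain $B_t$ on $\mathcal{M}$ with transition matrix $P$: choosing action $r$ costs $c_u(r-B_t)$ if $r>B_t$ (and then $B_t$ is fully observed) and $c_l(B_t-r)$ if $r\le B_t$ (and then only the event $B_t\ge r$ is observed); $b$ is the posterior distribution of the current state. *)

theory Defs
  imports Complex_Main
begin

text \<open>States are 0..M (type nat); vectors and matrices are functions, only values
  at indices \<le> M matter.\<close>

definition prob_vec :: "nat \<Rightarrow> (nat \<Rightarrow> real) \<Rightarrow> bool" where
  "prob_vec M b \<longleftrightarrow> (\<forall>i\<le>M. 0 \<le> b i) \<and> (\<Sum>i\<le>M. b i) = 1"

definition stochastic :: "nat \<Rightarrow> (nat \<Rightarrow> nat \<Rightarrow> real) \<Rightarrow> bool" where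
  "stochastic M P \<longleftrightarrow> (\<forall>i\<le>M. \<forall>j\<le>M. 0 \<le> P i j) \<and> (\<forall>i\<le>M. (\<Sum>j\<le>M. P i j) = 1)"

definition Cbar :: "nat \<Rightarrow> real \<Rightarrow> real \<Rightarrow> (nat \<Rightarrow> real) \<Rightarrow> nat \<Rightarrow> real" where
  "Cbar M cu cl b r =
     cl * (\<Sum>i\<in>{r..M}. b i * (real i - real r)) + cu * (\<Sum>i<r. b i * (real r - real i))"

definition Tr :: "nat \<Rightarrow> nat \<Rightarrow> (nat \<Rightarrow> real) \<Rightarrow> nat \<Rightarrow> real" where
  "Tr M r b = (\<lambda>i. if r \<le> i then b i / (\<Sum>j\<in>{r..M}. b j) else 0)"

definition vmul :: "nat \<Rightarrow> (nat \<Rightarrow> real) \<Rightarrow> (nat \<Rightarrow> nat \<Rightarrow> real) \<Rightarrow> nat \<Rightarrow> real" where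
  "vmul M q P = (\<lambda>j. \<Sum>i\<le>M. q i * P i j)"

text \<open>W n b r is V_{T-n}(b;r): n counts the remaining steps to the horizon T.\<close>
fun W :: "nat \<Rightarrow> real \<Rightarrow> real \<Rightarrow> real \<Rightarrow> (nat \<Rightarrow> nat \<Rightarrow> real) \<Rightarrow> nat \<Rightarrow> (nat \<Rightarrow> real) \<Rightarrow> nat \<Rightarrow> real" where
  "W M cu cl beta P 0 b r = Cbar M cu cl b r"
| "W M cu cl beta P (Suc n) b r =
     Cbar M cu cl b r + beta *
       ((if (\<Sum>i\<in>{r..M}. b i) = 0 then 0
         else (\<Sum>i\<in>{r..M}. b i) *
              Min ((\<lambda>s. W M cu cl beta P n (vmul M (Tr M r b) P) s) ` {..M}))
        + (\<Sum>i<r. b i * Min ((\<lambda>s. W M cu cl beta P n (\<lambda>j. P i j) s) ` {..M})))"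

definition Vr :: "nat \<Rightarrow> nat \<Rightarrow> real \<Rightarrow> real \<Rightarrow> real \<Rightarrow> (nat \<Rightarrow> nat \<Rightarrow> real) \<Rightarrow> nat \<Rightarrow> (nat \<Rightarrow> real) \<Rightarrow> nat \<Rightarrow> real" where
  "Vr M T cu cl beta P t b r = W M cu cl beta P (T - t) b r"

definition V :: "nat \<Rightarrow> nat \<Rightarrow> real \<Rightarrow> real \<Rightarrow> real \<Rightarrow> (nat \<Rightarrow> nat \<Rightarrow> real) \<Rightarrow> nat \<Rightarrow> (nat \<Rightarrow> real) \<Rightarrow> real" where
  "V M T cu cl beta P t b = Min ((\<lambda>r. Vr M T cu cl beta P t b r) ` {..M})"

end

theory Submission
  imports Defs
begin

text \<open>The Bayesian term \<open>(\<Sum>i\<in>{r..M}. b i) * V(T\<^sub>r[b] P)\<close> is the perspective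
  \<open>x \<mapsto> |x| f(x/|x|)\<close> of the concave function \<open>f = V\<^sub>t\<^sub>+\<^sub>1\<close>, evaluated at the vector
  \<open>x = (b restricted to {r..M}) P\<close>, which depends linearly on \<open>b\<close>. The perspective of a
  concave function is positively homogeneous and superadditive, hence concave, so
  every term of the recursion for \<open>V\<^sub>t(b;r)\<close> is concave in \<open>b\<close>; and a minimum of
  concave functions is concave. Backward induction on \<open>t\<close> finishes the argument; of the
  hypotheses only \<open>0 \<le> \<beta>\<close> and stochasticity of \<open>P\<close> are needed.\<close>

definition concave_prob :: "nat \<Rightarrow> ((nat \<Rightarrow> real) \<Rightarrow> real) \<Rightarrow> bool" where
  "concave_prob M f \<longleftrightarrow>
     (\<forall>b1 b2 lam. prob_vec M b1 \<longrightarrow> prob_vec M b2 \<longrightarrow> 0 \<le> lam \<longrightarrow> lam \<le> 1 \<longrightarrow>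
        f (\<lambda>i. lam * b1 i + (1 - lam) * b2 i) \<ge> lam * f b1 + (1 - lam) * f b2)"

lemma concave_probD:
  "concave_prob M f \<Longrightarrow> prob_vec M b1 \<Longrightarrow> prob_vec M b2 \<Longrightarrow> 0 \<le> lam \<Longrightarrow> lam \<le> 1 \<Longrightarrow>
     f (\<lambda>i. lam * b1 i + (1 - lam) * b2 i) \<ge> lam * f b1 + (1 - lam) * f b2"
  unfolding concave_prob_def by blast

lemma concave_prob_Min:
  assumes "finite A" "A \<noteq> {}" "\<And>s. s \<in> A \<Longrightarrow> concave_prob M (f s)"
  shows "concave_prob M (\<lambda>b. Min ((\<lambda>s. f s b) ` A))"
  unfolding concave_prob_def
proof (intro allI impI)
  fix b1 b2 and lam :: real
  assume b: "prob_vec M b1" "prob_vec M b2" and lam: "0 \<le> lam" "lam \<le> 1"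
  let ?m = "\<lambda>i. lam * b1 i + (1 - lam) * b2 i"
  have "Min ((\<lambda>s. f s ?m) ` A) \<in> (\<lambda>s. f s ?m) ` A"
    using assms(1,2) by (intro Min_in) auto
  then obtain s where s: "s \<in> A" "Min ((\<lambda>s. f s ?m) ` A) = f s ?m" by auto
  have "lam * Min ((\<lambda>s. f s b1) ` A) \<le> lam * f s b1"
    using s assms(1) lam by (intro mult_left_mono Min_le) auto
  moreover have "(1 - lam) * Min ((\<lambda>s. f s b2) ` A) \<le> (1 - lam) * f s b2"
    using s assms(1) lam by (intro mult_left_mono Min_le) auto
  moreover have "f s ?m \<ge> lam * f s b1 + (1 - lam) * f s b2"
    using concave_probD[OF assms(3)[OF s(1)] b lam] .
  ultimately show "Min ((\<lambda>s. f s ?m) ` A)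
      \<ge> lam * Min ((\<lambda>s. f s b1) ` A) + (1 - lam) * Min ((\<lambda>s. f s b2) ` A)"
    using s(2) by linarith
qed

definition mass :: "nat \<Rightarrow> (nat \<Rightarrow> real) \<Rightarrow> real" where
  "mass M x = (\<Sum>i\<le>M. x i)"

definition persp :: "nat \<Rightarrow> ((nat \<Rightarrow> real) \<Rightarrow> real) \<Rightarrow> (nat \<Rightarrow> real) \<Rightarrow> real" where
  "persp M f x = (if mass M x = 0 then 0 else mass M x * f (\<lambda>i. x i / mass M x))"

lemma mass_nonneg: "(\<And>i. i \<le> M \<Longrightarrow> 0 \<le> x i) \<Longrightarrow> 0 \<le> mass M x"
  unfolding mass_def by (auto intro: sum_nonneg)

lemma mass_eq_0_imp_zero:
  "(\<And>i. i \<le> M \<Longrightarrow> 0 \<le> x i) \<Longrightarrow> mass M x = 0 \<Longrightarrow> i \<le> M \<Longrightarrow> x i = 0"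
  unfolding mass_def by (subst (asm) sum_nonneg_eq_0_iff) auto

lemma prob_vec_normalize:
  "(\<And>i. i \<le> M \<Longrightarrow> 0 \<le> x i) \<Longrightarrow> 0 < mass M x \<Longrightarrow> prob_vec M (\<lambda>i. x i / mass M x)"
  unfolding prob_vec_def by (auto simp: sum_divide_distrib[symmetric] mass_def)

lemma persp_cong:
  assumes "\<And>p q. (\<And>i. i \<le> M \<Longrightarrow> p i = q i) \<Longrightarrow> f p = f q"
    and "\<And>i. i \<le> M \<Longrightarrow> x i = y i"
  shows "persp M f x = persp M f y"
proof -
  have "mass M x = mass M y" unfolding mass_def using assms(2) by simp
  moreover have "f (\<lambda>i. x i / mass M y) = f (\<lambda>i. y i / mass M y)"
    using assms(2) by (intro assms(1)) simp
  ultimately show ?thesis unfolding persp_def by simp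
qed

lemma persp_scale: "0 \<le> c \<Longrightarrow> persp M f (\<lambda>i. c * x i) = c * persp M f x"
proof -
  assume c: "0 \<le> c"
  have m: "mass M (\<lambda>i. c * x i) = c * mass M x"
    unfolding mass_def by (simp add: sum_distrib_left)
  show ?thesis
  proof (cases "c = 0 \<or> mass M x = 0")
    case False
    then have "(\<lambda>i. c * x i / (c * mass M x)) = (\<lambda>i. x i / mass M x)" by auto
    then show ?thesis unfolding persp_def m using False by auto
  qed (auto simp: persp_def m)
qed

lemma persp_superadd:
  assumes f: "concave_prob M f" "\<And>p q. (\<And>i. i \<le> M \<Longrightarrow> p i = q i) \<Longrightarrow> f p = f q"
    and x: "\<And>i. i \<le> M \<Longrightarrow> 0 \<le> x i" and y: "\<And>i. i \<le> M \<Longrightarrow> 0 \<le> y i"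
  shows "persp M f (\<lambda>i. x i + y i) \<ge> persp M f x + persp M f y"
proof -
  define a where "a = mass M x"
  define b where "b = mass M y"
  have mass_sum: "mass M (\<lambda>i. x i + y i) = a + b"
    unfolding mass_def a_def b_def by (simp add: sum.distrib)
  consider "a = 0" | "b = 0" | "0 < a" "0 < b"
    using mass_nonneg[OF x] mass_nonneg[OF y] unfolding a_def b_def by fastforce
  then show ?thesis
  proof cases
    case 1
    have "x i = 0" if "i \<le> M" for i
      using mass_eq_0_imp_zero[of M x i] x that 1 unfolding a_def by blast
    then have "persp M f (\<lambda>i. x i + y i) = persp M f y"
      by (intro persp_cong[OF f(2)]) auto
    with 1 show ?thesis by (simp add: persp_def a_def)
  next
    case 2
    have "y i = 0" if "i \<le> M" for i
      using mass_eq_0_imp_zero[of M y i] y that 2 unfolding b_def by blast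
    then have "persp M f (\<lambda>i. x i + y i) = persp M f x"
      by (intro persp_cong[OF f(2)]) auto
    with 2 show ?thesis by (simp add: persp_def b_def)
  next
    case 3
    define lam where "lam = a / (a + b)"
    have lam: "0 \<le> lam" "lam \<le> 1" "(a + b) * lam = a" "(a + b) * (1 - lam) = b"
      "1 - lam = b / (a + b)"
      using 3 by (auto simp: lam_def field_simps)
    have "lam * (x i / a) + (1 - lam) * (y i / b) = (x i + y i) / (a + b)" for i
      using 3 lam(5) by (simp add: lam_def add_divide_distrib)
    then have mix: "(\<lambda>i. (x i + y i) / (a + b)) = (\<lambda>i. lam * (x i / a) + (1 - lam) * (y i / b))"
      by simp
    have "prob_vec M (\<lambda>i. x i / a)" "prob_vec M (\<lambda>i. y i / b)"
      using prob_vec_normalize[of M x] prob_vec_normalize[of M y] x y 3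
      by (simp_all add: a_def b_def)
    then have "f (\<lambda>i. (x i + y i) / (a + b))
        \<ge> lam * f (\<lambda>i. x i / a) + (1 - lam) * f (\<lambda>i. y i / b)"
      unfolding mix using lam(1,2) by (rule concave_probD[OF f(1)])
    then have "(a + b) * (lam * f (\<lambda>i. x i / a) + (1 - lam) * f (\<lambda>i. y i / b))
        \<le> (a + b) * f (\<lambda>i. (x i + y i) / (a + b))"
      using 3 by (intro mult_left_mono) auto
    then have "a * f (\<lambda>i. x i / a) + b * f (\<lambda>i. y i / b)
        \<le> (a + b) * f (\<lambda>i. (x i + y i) / (a + b))"
      by (simp add: distrib_left mult.assoc[symmetric] lam(3,4))
    then show ?thesis using 3 unfolding persp_def mass_sum a_def[symmetric] b_def[symmetric]
      by simp
  qed
qed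

lemma persp_mix:
  assumes "concave_prob M f" "\<And>p q. (\<And>i. i \<le> M \<Longrightarrow> p i = q i) \<Longrightarrow> f p = f q"
    and "\<And>i. i \<le> M \<Longrightarrow> 0 \<le> x i" "\<And>i. i \<le> M \<Longrightarrow> 0 \<le> y i" "0 \<le> lam" "lam \<le> 1"
  shows "persp M f (\<lambda>i. lam * x i + (1 - lam) * y i)
           \<ge> lam * persp M f x + (1 - lam) * persp M f y"
  using persp_superadd[OF assms(1,2), of "\<lambda>i. lam * x i" "\<lambda>i. (1 - lam) * y i"] assms(3-6)
  by (simp add: persp_scale)

definition Wmin :: "nat \<Rightarrow> real \<Rightarrow> real \<Rightarrow> real \<Rightarrow> (nat \<Rightarrow> nat \<Rightarrow> real) \<Rightarrow> nat \<Rightarrow>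
    (nat \<Rightarrow> real) \<Rightarrow> real" where
  "Wmin M cu cl beta P n b = Min ((\<lambda>s. W M cu cl beta P n b s) ` {..M})"

definition tail_from :: "nat \<Rightarrow> (nat \<Rightarrow> real) \<Rightarrow> nat \<Rightarrow> real" where
  "tail_from r b = (\<lambda>i. if r \<le> i then b i else 0)"

lemma W_cong:
  "r \<le> M \<Longrightarrow> (\<And>i. i \<le> M \<Longrightarrow> p i = q i) \<Longrightarrow> W M cu cl beta P n p r = W M cu cl beta P n q r"
proof (induction n arbitrary: r)
  case 0
  then show ?case unfolding W.simps Cbar_def
    by (intro arg_cong2[where f="(+)"] arg_cong2[where f="(*)"] refl sum.cong) auto
next
  case (Suc n)
  have S: "(\<Sum>i\<in>{r..M}. p i) = (\<Sum>i\<in>{r..M}. q i)" using Suc.prems by (intro sum.cong) auto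
  have "vmul M (Tr M r p) P = vmul M (Tr M r q) P"
    unfolding vmul_def Tr_def using Suc.prems S by (intro ext sum.cong) auto
  moreover have "Cbar M cu cl p r = Cbar M cu cl q r" unfolding Cbar_def
    using Suc.prems by (intro arg_cong2[where f="(+)"] arg_cong2[where f="(*)"] refl sum.cong) auto
  moreover have "(\<Sum>i<r. p i * Wmin M cu cl beta P n (P i)) = (\<Sum>i<r. q i * Wmin M cu cl beta P n (P i))"
    using Suc.prems by (intro sum.cong) auto
  ultimately show ?case using S by (simp add: Wmin_def)
qed

lemma Wmin_cong:
  "(\<And>i. i \<le> M \<Longrightarrow> p i = q i) \<Longrightarrow> Wmin M cu cl beta P n p = Wmin M cu cl beta P n q"
  unfolding Wmin_def by (intro arg_cong[where f=Min] image_cong refl W_cong) auto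

lemma mass_vmul_tail_from:
  assumes "stochastic M P"
  shows "mass M (vmul M (tail_from r b) P) = (\<Sum>i\<in>{r..M}. b i)"
proof -
  have "mass M (vmul M (tail_from r b) P) = (\<Sum>i\<le>M. tail_from r b i * (\<Sum>j\<le>M. P i j))"
    unfolding mass_def vmul_def by (subst sum.swap) (simp add: sum_distrib_left)
  also have "\<dots> = (\<Sum>i\<le>M. tail_from r b i)"
    using assms unfolding stochastic_def by (intro sum.cong) auto
  also have "\<dots> = (\<Sum>i\<in>{..M} \<inter> {i. r \<le> i}. b i)"
    unfolding tail_from_def by (simp add: sum.inter_restrict)
  also have "{..M} \<inter> {i. r \<le> i} = {r..M}" by auto
  finally show ?thesis .
qed

lemma persp_vmul_tail_from:
  assumes "stochastic M P"
  shows "persp M f (vmul M (tail_from r b) P)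
       = (if (\<Sum>i\<in>{r..M}. b i) = 0 then 0
          else (\<Sum>i\<in>{r..M}. b i) * f (vmul M (Tr M r b) P))"
proof (cases "(\<Sum>i\<in>{r..M}. b i) = 0")
  case False
  have "(\<lambda>i. vmul M (tail_from r b) P i / (\<Sum>i\<in>{r..M}. b i)) = vmul M (Tr M r b) P"
    unfolding vmul_def Tr_def tail_from_def by (auto simp: sum_divide_distrib intro!: ext sum.cong)
  with False show ?thesis unfolding persp_def mass_vmul_tail_from[OF assms] by simp
qed (simp add: persp_def mass_vmul_tail_from[OF assms])

lemma W_Suc_persp:
  assumes "stochastic M P"
  shows "W M cu cl beta P (Suc n) b r = Cbar M cu cl b r + beta *
           (persp M (Wmin M cu cl beta P n) (vmul M (tail_from r b) P)
            + (\<Sum>i<r. b i * Wmin M cu cl beta P n (P i)))"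
  unfolding persp_vmul_tail_from[OF assms] by (simp add: Wmin_def)

lemma sum_mix:
  "(\<Sum>i\<in>A. (lam * b1 i + (1 - lam) * b2 i) * g i)
     = lam * (\<Sum>i\<in>A. b1 i * g i) + (1 - lam) * (\<Sum>i\<in>A. b2 i * (g i :: real))"
  unfolding sum_distrib_left sum.distrib[symmetric] by (rule sum.cong) (auto simp: algebra_simps)

lemma Cbar_mix:
  "Cbar M cu cl (\<lambda>i. lam * b1 i + (1 - lam) * b2 i) r
     = lam * Cbar M cu cl b1 r + (1 - lam) * Cbar M cu cl b2 r"
  unfolding Cbar_def sum_mix by (simp add: algebra_simps)

lemma vmul_tail_from_mix:
  "vmul M (tail_from r (\<lambda>i. lam * b1 i + (1 - lam) * b2 i)) P
     = (\<lambda>j. lam * vmul M (tail_from r b1) P j + (1 - lam) * vmul M (tail_from r b2) P j)"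
proof -
  have tail_mix: "tail_from r (\<lambda>i. lam * b1 i + (1 - lam) * b2 i)
      = (\<lambda>i. lam * tail_from r b1 i + (1 - lam) * tail_from r b2 i)"
    unfolding tail_from_def by auto
  show ?thesis unfolding tail_mix vmul_def sum_mix ..
qed

lemma vmul_tail_from_nonneg:
  "stochastic M P \<Longrightarrow> prob_vec M b \<Longrightarrow> j \<le> M \<Longrightarrow> 0 \<le> vmul M (tail_from r b) P j"
  unfolding vmul_def tail_from_def stochastic_def prob_vec_def by (auto intro!: sum_nonneg)

lemma concave_prob_W:
  assumes P: "stochastic M P" and beta: "0 \<le> beta"
  shows "concave_prob M (\<lambda>b. W M cu cl beta P n b r)"
proof (induction n arbitrary: r)
  case 0
  then show ?case unfolding concave_prob_def by (simp add: Cbar_mix)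
next
  case (Suc n)
  let ?f = "Wmin M cu cl beta P n"
  let ?h = "\<lambda>b. persp M ?f (vmul M (tail_from r b) P)"
  let ?d = "\<lambda>b. \<Sum>i<r. b i * ?f (P i)"
  have f: "concave_prob M ?f"
    unfolding Wmin_def by (intro concave_prob_Min Suc.IH) auto
  show ?case unfolding concave_prob_def W_Suc_persp[OF P]
  proof (intro allI impI)
    fix b1 b2 and lam :: real
    assume b: "prob_vec M b1" "prob_vec M b2" and lam: "0 \<le> lam" "lam \<le> 1"
    let ?m = "\<lambda>i. lam * b1 i + (1 - lam) * b2 i"
    have "?h ?m \<ge> lam * ?h b1 + (1 - lam) * ?h b2"
      unfolding vmul_tail_from_mix
      by (rule persp_mix[OF f Wmin_cong vmul_tail_from_nonneg[OF P b(1)]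
                            vmul_tail_from_nonneg[OF P b(2)] lam])
    then have "lam * (?h b1 + ?d b1) + (1 - lam) * (?h b2 + ?d b2) \<le> ?h ?m + ?d ?m"
      unfolding sum_mix by (simp only: distrib_left)
    then have "beta * (lam * (?h b1 + ?d b1) + (1 - lam) * (?h b2 + ?d b2))
        \<le> beta * (?h ?m + ?d ?m)"
      using beta by (rule mult_left_mono)
    moreover have regroup: "lam * (c1 + beta * y1) + (1 - lam) * (c2 + beta * y2)
        = (lam * c1 + (1 - lam) * c2) + beta * (lam * y1 + (1 - lam) * y2)" for c1 c2 y1 y2 :: real
      by (simp add: algebra_simps)
    ultimately show "Cbar M cu cl ?m r + beta * (?h ?m + ?d ?m)
        \<ge> lam * (Cbar M cu cl b1 r + beta * (?h b1 + ?d b1))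
          + (1 - lam) * (Cbar M cu cl b2 r + beta * (?h b2 + ?d b2))"
      unfolding Cbar_mix regroup by linarith
  qed
qed

theorem lemma3:
  fixes M T :: nat and cu cl beta lam :: real and P :: "nat \<Rightarrow> nat \<Rightarrow> real"
    and b1 b2 :: "nat \<Rightarrow> real" and t r :: nat
  assumes "T \<ge> 1" and "cu > 0" and "cl > 0" and "0 \<le> beta" and "beta \<le> 1"
    and "stochastic M P"
    and "1 \<le> t" and "t \<le> T" and "r \<le> M"
    and "prob_vec M b1" and "prob_vec M b2"
    and "0 \<le> lam" and "lam \<le> 1"
  shows "Vr M T cu cl beta P t (\<lambda>i. lam * b1 i + (1 - lam) * b2 i) r
           \<ge> lam * Vr M T cu cl beta P t b1 r + (1 - lam) * Vr M T cu cl beta P t b2 r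
         \<and> V M T cu cl beta P t (\<lambda>i. lam * b1 i + (1 - lam) * b2 i)
           \<ge> lam * V M T cu cl beta P t b1 + (1 - lam) * V M T cu cl beta P t b2"
proof -
  have Vr: "concave_prob M (\<lambda>b. Vr M T cu cl beta P t b s)" for s
    unfolding Vr_def by (rule concave_prob_W[OF assms(6,4)])
  have "concave_prob M (V M T cu cl beta P t)"
    unfolding V_def by (intro concave_prob_Min Vr) auto
  with Vr show ?thesis using assms(10-13) by (blast dest: concave_probD)
qed

end
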